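(* Let $w$ be a perfectly clustering Lyndon word over a totally ordered alphabet. Then $w$ has a unique palindromic special factorization $w=a_1\pi_1a_2\pi_2\cdots\pi_{k-1}a_k$. Precisely: for every $i\in\{1,\dots,k\}$, the word $a_i\pi_ia_{i+1}\cdots\pi_{k-1}a_k$ is the lexicographically smallest suffix of $w$ beginning with $a_i$, and $a_i\pi_i\cdots\pi_{k-1}a_k\,a_1\pi_1\cdots a_{i-1}\pi_{i-1}$ is the lexicographically smallest conjugate of $w$ beginning with $a_i$.
   Context: A special factorization of $w$ is a factorization $w=a_1\pi_1a_2\cdots\pi_{k-1}a_k$ where the set of letters occurring in $w$ is $\{a_1<\cdots<a_k\}$ and $\pi_1,\dots,\pi_{k-1}$ are words; it is palindromic if every $\pi_i$ is a palindrome. Conjugates of $w$ are the words $yx$ where $w=xy$. Lexicographic order: a proper prefix is smaller. A Lyndon word is a primitive word strictly smaller than its other conjugates. For a primitive word $v$ of length $n$ with conjugates $v_1<\cdots<v_n$, $\mathrm{bw}(v)$ is the word formed by the last letters of $v_1,\dots,v_n$; $v$ is perfectly clustering if $\mathrm{bw}(v)$ is weakly decreasing. *)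

theory Defs
  imports Main "HOL-Library.List_Lexorder"
begin

(* Words are lists over a linearly ordered alphabet 'a; the order on words is the
   lexicographic order of HOL-Library.List_Lexorder (a proper prefix is smaller). *)

definition conjugates :: "'a list \<Rightarrow> 'a list set" where
  "conjugates w = {y @ x | x y. w = x @ y}"

definition primitive :: "'a list \<Rightarrow> bool" where
  "primitive w \<longleftrightarrow> w \<noteq> [] \<and> (\<forall>u k. concat (replicate k u) = w \<longrightarrow> k = 1)"

definition lyndon :: "'a::linorder list \<Rightarrow> bool" where
  "lyndon w \<longleftrightarrow> primitive w \<and> (\<forall>v \<in> conjugates w. v \<noteq> w \<longrightarrow> w < v)"

definition bw :: "'a::linorder list \<Rightarrow> 'a list" where
  "bw v = map last (sorted_list_of_set (conjugates v))"

definition perfectly_clustering :: "'a::linorder list \<Rightarrow> bool" where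
  "perfectly_clustering v \<longleftrightarrow> primitive v \<and> sorted_wrt (\<ge>) (bw v)"

fun sw :: "'a list \<Rightarrow> 'a list list \<Rightarrow> 'a list" where
  "sw [] _ = []"
| "sw [a] _ = [a]"
| "sw (a # b # as) [] = a # sw (b # as) []"
| "sw (a # b # as) (p # ps) = a # p @ sw (b # as) ps"

definition letters :: "'a::linorder list \<Rightarrow> 'a list" where
  "letters w = sorted_list_of_set (set w)"

definition special_factorization :: "'a::linorder list \<Rightarrow> 'a list list \<Rightarrow> bool" where
  "special_factorization w ps \<longleftrightarrow>
     length ps + 1 = length (letters w) \<and> w = sw (letters w) ps"

definition palindromic_special_factorization :: "'a::linorder list \<Rightarrow> 'a list list \<Rightarrow> bool" where
  "palindromic_special_factorization w ps \<longleftrightarrow>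
     special_factorization w ps \<and> (\<forall>p \<in> set ps. rev p = p)"

end

theory Submission
  imports Defs
begin

(*
  Let rot q be the rotation of w starting at position q, and rank q its position among the sorted
  conjugates. The conjugates come in blocks by first letter and, by perfect clustering, in blocks by
  last letter (in decreasing order), which gives the shift rule
    rank (q + 1) = rank q - n_below (w!q) + n_above (w!q).
  Since w is Lyndon, rank 0 = 0, and induction with the shift rule shows that q \<mapsto> max_pos - q
  reverses the ranks and that the circular word w is symmetric.

  Let start i be the position of the least rotation starting with the i-th letter a_i. The ranks of
  start i + 1 and start (i + 1) add up to n, and the shift rule moves such complementary pairs inwards,
  with equal letters, until the left one meets a start position. The places where a chain can close
  up are counted using the parities of the letter multiplicities and the symmetry: there are exactly
  k - 1 of them, at most one between consecutive start positions. Hence every chain runs from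
  start i to start (i + 1), the start positions increase and the factors between them are
  palindromes; this is a palindromic special factorization, whose suffixes are the minimal ones
  because the suffixes of a Lyndon word are ordered like its rotations.

  Conversely, if some palindromic factor a_i p_i a_(i+1) of another special factorization properly
  contained a start position, its mirror image would read w backwards from that start position
  beyond the greatest rotation with the same first letter.
*)

section \<open>Lexicographic order, rotations and Lyndon words\<close>

lemma less_same_length_iff_nth:
  fixes xs ys :: "'a::linorder list"
  assumes "length xs = length ys"
  shows "xs < ys \<longleftrightarrow> (\<exists>m<length xs. (\<forall>j<m. xs!j = ys!j) \<and> xs!m < ys!m)"
proof
  assume "xs < ys"
  then obtain i where i: "i < length xs" "take i xs = take i ys" "xs!i < ys!i"
    using assms unfolding list_less_def lexord_take_index_conv by auto
  then show "\<exists>m<length xs. (\<forall>j<m. xs!j = ys!j) \<and> xs!m < ys!m"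
    by (metis nth_take)
next
  assume "\<exists>m<length xs. (\<forall>j<m. xs!j = ys!j) \<and> xs!m < ys!m"
  then obtain m where m: "m < length xs" "\<forall>j<m. xs!j = ys!j" "xs!m < ys!m" by blast
  have "take m xs = take m ys"
    using m assms by (intro nth_take_lemma) auto
  then show "xs < ys" using m assms unfolding list_less_def lexord_take_index_conv by auto
qed

lemma less_append_if_first_difference:
  fixes xs ys :: "'a::linorder list"
  assumes "i < length xs" "i < length ys" "take i xs = take i ys" "xs!i < ys!i"
  shows "xs @ us < ys @ vs"
proof -
  have "take i (xs @ us) = take i (ys @ vs)" "(xs @ us) ! i < (ys @ vs) ! i"
    using assms by (simp_all add: nth_append)
  moreover have "i < min (length (xs @ us)) (length (ys @ vs))" using assms by simp
  ultimately show ?thesis unfolding list_less_def lexord_take_index_conv by blast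
qed

lemma less_append_same_length:
  fixes xs ys :: "'a::linorder list"
  assumes "length xs = length ys" "xs < ys"
  shows "xs @ us < ys @ vs"
  using assms lexord_sufI[of xs ys _ us vs] by (simp add: list_less_def)

lemma append_less_same_length_imp_le:
  fixes xs ys :: "'a::linorder list"
  assumes "length xs = length ys" "xs @ us < ys @ vs"
  shows "xs \<le> ys"
proof (rule ccontr)
  assume "\<not> xs \<le> ys"
  then have "ys @ vs < xs @ us" using assms(1) by (intro less_append_same_length) auto
  then show False using assms(2) by simp
qed

lemma snoc_less_snoc_iff:
  fixes xs ys :: "'a::linorder list"
  assumes "length xs = length ys"
  shows "xs @ [a] < ys @ [a] \<longleftrightarrow> xs < ys"
proof
  assume less: "xs @ [a] < ys @ [a]"
  then have "xs \<noteq> ys" by auto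
  with append_less_same_length_imp_le[OF assms less] show "xs < ys" by simp
qed (rule less_append_same_length[OF assms])

lemma append_less_append_left_iff: "zs @ xs < zs @ ys \<longleftrightarrow> xs < (ys::'a::linorder list)"
  by (induct zs) auto

lemma conjugates_eq_range_rotate: "conjugates w = range (\<lambda>q. rotate q w)"
proof (intro set_eqI iffI)
  fix v assume "v \<in> conjugates w"
  then obtain x y where "w = x @ y" "v = y @ x" by (auto simp: conjugates_def)
  then show "v \<in> range (\<lambda>q. rotate q w)" by (metis rangeI rotate_append)
next
  fix v assume "v \<in> range (\<lambda>q. rotate q w)"
  then obtain q where "v = rotate q w" by auto
  then have "w = take (q mod length w) w @ drop (q mod length w) w"
    and "v = drop (q mod length w) w @ take (q mod length w) w"
    by (simp_all add: rotate_drop_take)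
  then show "v \<in> conjugates w" unfolding conjugates_def by blast
qed

lemma primitive_rotate_neq:
  assumes "primitive w" "0 < d" "d < length w"
  shows "rotate d w \<noteq> w"
proof
  assume fixed: "rotate d w = w"
  then have "drop d w @ take d w = take d w @ drop d w"
    using assms by (simp add: rotate_drop_take)
  moreover have "drop d w \<noteq> []" "take d w \<noteq> []" using assms by auto
  ultimately obtain k u where "1 < k" "concat (replicate k u) = drop d w @ take d w"
    using comm_append_is_replicate by metis
  moreover have "drop d w @ take d w = w"
    using fixed assms by (simp add: rotate_drop_take)
  ultimately show False using assms(1) unfolding primitive_def by auto
qed

lemma primitive_rotate_inj:
  assumes "primitive w" "q < length w" "q' < length w" "rotate q w = rotate q' w"
  shows "q = q'"
proof -
  have rotations_differ: False if "a < b" "b < length w" "rotate a w = rotate b w" for a b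
  proof -
    have "rotate (length w - b + a) w = rotate (length w - b) (rotate a w)"
      by (simp add: rotate_rotate)
    also have "\<dots> = rotate (length w - b) (rotate b w)"
      using that(3) by (rule arg_cong)
    also have "\<dots> = w"
      using that(2) by (simp add: rotate_rotate)
    finally have "rotate (length w - b + a) w = w" .
    moreover have "0 < length w - b + a" "length w - b + a < length w" using that by auto
    ultimately show False using primitive_rotate_neq[OF assms(1)] by metis
  qed
  show ?thesis
    using rotations_differ[of q q'] rotations_differ[of q' q] assms by (metis linorder_neqE_nat)
qed

lemma lyndon_less_rotate:
  assumes "lyndon w" "0 < q" "q < length w"
  shows "w < rotate q w"
proof -
  have "rotate q w \<noteq> w"
    using primitive_rotate_neq assms by (auto simp: lyndon_def)
  then show ?thesis
    using assms(1) by (auto simp: lyndon_def conjugates_eq_range_rotate)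
qed

lemma lyndon_le_rotate: "lyndon w \<Longrightarrow> q < length w \<Longrightarrow> w \<le> rotate q w"
  using lyndon_less_rotate[of w q] by (cases "q = 0") auto

lemma lyndon_prefix_less_suffix:
  assumes "lyndon w" "0 < r" "r < length w"
  shows "take (length w - r) w < drop r w"
proof -
  have "take (length w - r) w @ drop (length w - r) w < drop r w @ take r w"
    using lyndon_less_rotate[OF assms] assms by (simp add: rotate_drop_take)
  then have le: "take (length w - r) w \<le> drop r w"
    by (rule append_less_same_length_imp_le[rotated]) (use assms in simp)
  have "take (length w - r) w \<noteq> drop r w"
  proof
    assume border: "take (length w - r) w = drop r w"
    define C D E where "C = drop r w" and "D = take r w" and "E = drop (length w - r) w"
    have wCE: "w = C @ E"
      using border by (metis C_def E_def append_take_drop_id)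
    have wDC: "w = D @ C" by (simp add: C_def D_def)
    have "length D = length E" using assms by (simp add: D_def E_def)
    have "rotate r w = C @ D" using assms by (simp add: rotate_drop_take C_def D_def)
    then have "C @ E < C @ D" using lyndon_less_rotate[OF assms] wCE by simp
    then have "E < D" by (simp add: append_less_append_left_iff)
    moreover have "rotate (length w - r) w = E @ C"
      using assms border by (simp add: rotate_drop_take C_def E_def)
    then have "D @ C < E @ C" using lyndon_less_rotate[of w "length w - r"] assms wDC by simp
    then have "D \<le> E" using \<open>length D = length E\<close> by (rule append_less_same_length_imp_le[rotated])
    ultimately show False by simp
  qed
  with le show ?thesis by simp
qed

lemma lyndon_drop_le_drop:
  assumes lyn: "lyndon w" and y1: "y1 < length w" and y2: "y2 < length w"
    and rot_less: "rotate y1 w < rotate y2 w"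
  shows "drop y1 w \<le> drop y2 w"
proof (rule ccontr)
  define A B where "A = drop y1 w" and "B = drop y2 w"
  have rot1: "rotate y1 w = A @ take y1 w" and rot2: "rotate y2 w = B @ take y2 w"
    using y1 y2 by (simp_all add: rotate_drop_take A_def B_def)
  assume "\<not> drop y1 w \<le> drop y2 w"
  then have "B < A" by (simp add: A_def B_def)
  then have "(B, A) \<in> lexord {(u, v). u < v}" unfolding list_less_def .
  then consider (prefix) "length B < length A" "take (length B) A = B"
    | (difference) i where "i < length B" "i < length A" "take i B = take i A" "B!i < A!i"
    unfolding lexord_take_index_conv by auto
  then have "rotate y2 w < rotate y1 w"
  proof cases
    case difference
    then show ?thesis unfolding rot1 rot2 by (rule less_append_if_first_difference)
  next
    case prefix
    define r where "r = y1 + (length w - y2)"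
    have "y1 < y2" using prefix y1 y2 by (simp add: A_def B_def)
    then have r: "0 < r" "r < length w" using y2 by (auto simp: r_def)
    have "drop (length B) A = drop r w" by (simp add: A_def B_def r_def add.commute)
    then have A: "A = B @ drop r w" using prefix(2) by (metis append_take_drop_id)
    have "take (length w - r) (take y2 w) = take (length w - r) w"
      using \<open>y1 < y2\<close> y2 by (simp add: r_def min_def)
    then have take_y2: "take y2 w = take (length w - r) w @ drop (length w - r) (take y2 w)"
      by (metis append_take_drop_id)
    have "take (length w - r) w < drop r w" by (rule lyndon_prefix_less_suffix[OF lyn r])
    then have "take (length w - r) w @ drop (length w - r) (take y2 w) < drop r w @ take y1 w"
      by (rule less_append_same_length[rotated]) (use r in simp)
    then show ?thesis unfolding rot1 rot2 A take_y2[symmetric] by (simp add: append_less_append_left_iff)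
  qed
  then show False using rot_less by simp
qed

section \<open>Reflections modulo \<open>N\<close>\<close>

lemma mod_reflect_fixed_iff:
  fixes N T q :: nat
  assumes "0 < N" "q < N"
  shows "(T + 2*N - 1 - q) mod N = q \<longleftrightarrow> (2*q) mod N = (T + 2*N - 1) mod N"
proof -
  have sum: "(T + 2*N - 1 - q) + q = T + 2*N - 1" using assms by simp
  have "(T + 2*N - 1) mod N = ((T + 2*N - 1 - q) mod N + q) mod N"
    by (metis sum mod_add_left_eq)
  moreover have "a = q" if "a < N" "(a + q) mod N = (q + q) mod N" for a
  proof -
    have "N dvd nat \<bar>int (a + q) - int (q + q)\<bar>" using that(2) mod_eq_iff_dvd_symdiff_nat by blast
    moreover have "nat \<bar>int (a + q) - int (q + q)\<bar> < N" using that(1) assms by linarith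
    ultimately have "nat \<bar>int (a + q) - int (q + q)\<bar> = 0" by (metis dvd_imp_le gr0I not_less)
    then show "a = q" by simp
  qed
  ultimately show ?thesis using assms by (auto simp: mult_2)
qed

lemma double_mod_inj_odd:
  fixes N q1 q2 :: nat
  assumes "odd N" "q1 < N" "q2 < N" "(2*q1) mod N = (2*q2) mod N"
  shows "q1 = q2"
proof -
  have "a = b" if "a \<le> b" "b < N" "(2*a) mod N = (2*b) mod N" for a b
  proof -
    have "N dvd (b - a) * 2"
      using that mod_eq_dvd_iff_nat[of "2*a" "2*b" N] by (simp add: algebra_simps diff_mult_distrib2)
    then have "N dvd b - a" using coprime_dvd_mult_left_iff[of N 2 "b - a"] assms(1) by simp
    moreover have "b - a < N" using that by simp
    ultimately show "a = b" using that(1) by (metis dvd_imp_le gr0I not_less diff_is_0_eq le_antisym)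
  qed
  then show ?thesis using assms by (metis nat_le_linear)
qed

lemma double_mod_solutions_even:
  fixes N e :: nat
  assumes "N = 2*h" "e < h"
  shows "{q. q < N \<and> (2*q) mod N = (2*e) mod N} = {e, e + h}"
proof (intro set_eqI iffI)
  fix q assume "q \<in> {q. q < N \<and> (2*q) mod N = (2*e) mod N}"
  then have q: "q < N" "2 * (q mod h) = 2 * (e mod h)" using assms by (auto simp: mod_mult_mult1)
  then have "q mod h = e" using assms by simp
  moreover have "q div h < 2" using q assms by (simp add: div_less_iff_less_mult)
  then have "q div h = 0 \<or> q div h = 1" by auto
  ultimately show "q \<in> {e, e + h}"
    by (metis add.commute add_cancel_left_left div_mult_mod_eq insert_iff mult.left_neutral mult_zero_left)
qed (use assms in \<open>auto simp: algebra_simps\<close>)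

lemma mod_reflect_fixed_points_even:
  fixes N T :: nat
  assumes "even N" "T < N"
    and no_fixed: "\<forall>q<N. (T + N - q) mod N \<noteq> q"
  shows "card {q. q < N \<and> (T + 2*N - 1 - q) mod N = q} = 2"
proof -
  obtain h where h: "N = 2*h" using assms(1) by blast
  have "odd T"
  proof
    assume "even T"
    then obtain e where "T = 2*e" by blast
    then have "e < N" "(T + N - e) mod N = e" using assms(2) by auto
    then show False using no_fixed by blast
  qed
  then obtain e where e: "T = 2*e + 1" by (metis oddE)
  have "e < h" using e h assms(2) by simp
  have "T + 2*N - 1 = 2*e + N*2" using e by simp
  then have "(T + 2*N - 1) mod N = (2*e) mod N" by simp
  then have "{q. q < N \<and> (T + 2*N - 1 - q) mod N = q} = {q. q < N \<and> (2*q) mod N = (2*e) mod N}"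
    using mod_reflect_fixed_iff[of N] h \<open>e < h\<close> by auto
  also have "\<dots> = {e, e + h}" by (rule double_mod_solutions_even[OF h \<open>e < h\<close>])
  finally show ?thesis using \<open>e < h\<close> by simp
qed

lemma sw_drop_Suc:
  assumes "Suc i < length as" "i < length ps"
  shows "sw (drop i as) (drop i ps) = as!i # ps!i @ sw (drop (Suc i) as) (drop (Suc i) ps)"
proof -
  have "drop i as = as!i # as!Suc i # drop (Suc (Suc i)) as"
    using assms by (simp add: Cons_nth_drop_Suc)
  moreover have "drop (Suc i) as = as!Suc i # drop (Suc (Suc i)) as"
    using assms by (simp add: Cons_nth_drop_Suc)
  moreover have "drop i ps = ps!i # drop (Suc i) ps"
    using assms by (simp add: Cons_nth_drop_Suc)
  ultimately show ?thesis by simp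
qed

lemma sw_drop_last: "as \<noteq> [] \<Longrightarrow> sw (drop (length as - 1) as) ps = [last as]"
  by (cases as rule: rev_cases) auto

lemma sw_Cons_exists: "\<exists>r. sw (a # as) ps = a # r"
  by (cases as; cases ps) auto

definition sw_pos :: "'a list list \<Rightarrow> nat \<Rightarrow> nat" where
  "sw_pos ps i = i + sum_list (map length (take i ps))"

lemma sw_pos_Suc: "i < length ps \<Longrightarrow> sw_pos ps (Suc i) = sw_pos ps i + 1 + length (ps!i)"
  by (simp add: sw_pos_def take_Suc_conv_app_nth)

lemma drop_sw_pos:
  assumes "length ps + 1 = length as" "i < length as"
  shows "drop (sw_pos ps i) (sw as ps) = sw (drop i as) (drop i ps)"
  using assms(2)
proof (induction i)
  case 0
  then show ?case by (simp add: sw_pos_def)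
next
  case (Suc i)
  then have "drop (sw_pos ps i) (sw as ps) = as!i # ps!i @ sw (drop (Suc i) as) (drop (Suc i) ps)"
    using sw_drop_Suc[of i as ps] assms(1) by simp
  then have "drop (1 + length (ps!i)) (drop (sw_pos ps i) (sw as ps))
      = sw (drop (Suc i) as) (drop (Suc i) ps)" by simp
  then show ?case
    using sw_pos_Suc[of i ps] assms(1) Suc.prems by (simp add: add.commute add.left_commute)
qed

section \<open>Ranks of the rotations of a primitive word\<close>

locale primitive_word =
  fixes w :: "'a::linorder list"
  assumes primitive_w: "primitive w"
begin

abbreviation "n \<equiv> length w"
abbreviation "L \<equiv> letters w"
abbreviation "k \<equiv> length (letters w)"

definition rot :: "nat \<Rightarrow> 'a list" where "rot q = rotate q w"

lemma length_pos: "0 < n"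
  using primitive_w unfolding primitive_def by auto

lemma length_rot [simp]: "length (rot q) = n"
  by (simp add: rot_def)

lemma rot_nth: "j < n \<Longrightarrow> rot q ! j = w ! ((q + j) mod n)"
  by (simp add: rot_def nth_rotate)

lemma rot_nth_0: "q < n \<Longrightarrow> rot q ! 0 = w ! q"
  using length_pos by (simp add: rot_nth)

lemma rot_drop_take: "q < n \<Longrightarrow> rot q = drop q w @ take q w"
  by (simp add: rot_def rotate_drop_take)

lemma rot_inj: "q < n \<Longrightarrow> q' < n \<Longrightarrow> rot q = rot q' \<Longrightarrow> q = q'"
  using primitive_rotate_inj[OF primitive_w] by (simp add: rot_def)

lemma conjugates_eq_rot: "conjugates w = rot ` {..<n}"
proof -
  have "range (\<lambda>q. rotate q w) = rot ` {..<n}"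
    using length_pos by (auto simp: rot_def image_iff intro: exI[of _ "_ mod n"] rotate_conv_mod)
  then show ?thesis by (simp add: conjugates_eq_range_rotate)
qed

lemma rot_in_conjugates: "q < n \<Longrightarrow> rot q \<in> conjugates w"
  using conjugates_eq_rot by auto

definition cnext :: "nat \<Rightarrow> nat" where "cnext q = Suc q mod n"
definition cprev :: "nat \<Rightarrow> nat" where "cprev q = (q + n - 1) mod n"

lemma cnext_lt: "cnext q < n"
  using length_pos by (simp add: cnext_def)

lemma cprev_lt: "cprev q < n"
  using length_pos by (simp add: cprev_def)

lemma cnext_Suc: "Suc q < n \<Longrightarrow> cnext q = Suc q"
  by (simp add: cnext_def)

lemma cnext_cprev: "q < n \<Longrightarrow> cnext (cprev q) = q"
proof -
  assume q: "q < n"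
  have "cnext (cprev q) = Suc (q + n - 1) mod n"
    by (simp add: cnext_def cprev_def mod_Suc_eq)
  also have "Suc (q + n - 1) = q + n" using length_pos by simp
  finally show ?thesis using q by simp
qed

lemma cprev_eq: "cprev q = (q + (n - 1)) mod n"
proof -
  have "q + n - 1 = q + (n - 1)" using length_pos by linarith
  then show ?thesis by (simp only: cprev_def)
qed

lemma cprev_pos: assumes "0 < q" "q < n" shows "cprev q = q - 1"
proof -
  have "cprev q = (q + n - 1) mod n" by (simp only: cprev_def)
  also have "q + n - 1 = (q - 1) + n" using assms by linarith
  also have "((q - 1) + n) mod n = (q - 1) mod n" by (rule mod_add_self2)
  also have "\<dots> = q - 1" using assms by simp
  finally show ?thesis .
qed

lemma cprev_cnext: "q < n \<Longrightarrow> cprev (cnext q) = q"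
proof (cases "Suc q < n")
  case True
  then show ?thesis by (simp add: cnext_Suc cprev_pos)
next
  case False
  moreover assume "q < n"
  ultimately have "Suc q = n" by simp
  then show ?thesis by (simp add: cnext_def cprev_def)
qed

lemma cnext_inj: "q < n \<Longrightarrow> q' < n \<Longrightarrow> cnext q = cnext q' \<Longrightarrow> q = q'"
  by (metis cprev_cnext)

lemma card_cnext_image: "S \<subseteq> {..<n} \<Longrightarrow> card (cnext ` S) = card S"
  by (intro card_image) (auto simp: inj_on_def intro: cnext_inj)

lemma Collect_eq_cnext_image: "{u. u < n \<and> P u} = cnext ` {v. v < n \<and> P (cnext v)}"
proof (intro set_eqI iffI)
  fix u assume u: "u \<in> {u. u < n \<and> P u}"
  then have "u = cnext (cprev u)" using cnext_cprev by simp
  then show "u \<in> cnext ` {v. v < n \<and> P (cnext v)}"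
    using u cprev_lt by (metis (mono_tags, lifting) image_eqI mem_Collect_eq)
qed (auto simp: cnext_lt)

lemma rot_cnext: "rot (cnext q) = rotate1 (rot q)"
  by (metis cnext_def rot_def rotate_conv_mod rotate_Suc)

lemma last_rot: "q < n \<Longrightarrow> last (rot q) = w ! cprev q"
proof -
  assume q: "q < n"
  have "last (rot q) = rot q ! (n - 1)"
    using length_pos by (metis last_conv_nth length_rot list.size(3) not_less0)
  also have "\<dots> = w ! cprev q"
    using length_pos by (simp add: rot_nth cprev_eq)
  finally show ?thesis .
qed

lemma rot_Cons: "q < n \<Longrightarrow> \<exists>xs. rot q = w!q # xs \<and> rot (cnext q) = xs @ [w!q]"
proof -
  assume q: "q < n"
  obtain x xs where "rot q = x # xs"
    using length_pos by (metis length_rot length_0_conv neq_Nil_conv not_less0)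
  moreover have "x = w!q" using rot_nth_0[OF q] calculation by simp
  ultimately show ?thesis by (simp add: rot_cnext)
qed

lemma rot_less_iff_rot_cnext_less:
  assumes "u < n" "v < n" "w!u = w!v"
  shows "rot u < rot v \<longleftrightarrow> rot (cnext u) < rot (cnext v)"
proof -
  obtain xs where xs: "rot u = w!u # xs" "rot (cnext u) = xs @ [w!u]" using rot_Cons assms by blast
  obtain ys where ys: "rot v = w!v # ys" "rot (cnext v) = ys @ [w!v]" using rot_Cons assms by blast
  have "length xs = length ys" using xs ys length_rot by (metis length_Cons nat.inject)
  then show ?thesis using xs ys assms(3) by (simp add: snoc_less_snoc_iff)
qed

lemma rot_less_if_first_less: "u < n \<Longrightarrow> v < n \<Longrightarrow> w!u < w!v \<Longrightarrow> rot u < rot v"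
  using less_same_length_iff_nth[of "rot u" "rot v"] rot_nth_0 length_pos by auto

definition rank :: "nat \<Rightarrow> nat" where "rank q = card {y. y < n \<and> rot y < rot q}"

lemma rank_lt: assumes "q < n" shows "rank q < n"
proof -
  have "rank q \<le> card ({..<n} - {q})"
    unfolding rank_def by (intro card_mono) auto
  then show ?thesis using assms length_pos by simp
qed

lemma rank_strict_mono: assumes "q < n" "q' < n" "rot q < rot q'" shows "rank q < rank q'"
proof -
  have "{y. y < n \<and> rot y < rot q} \<subset> {y. y < n \<and> rot y < rot q'}"
    using assms by auto
  then show ?thesis unfolding rank_def by (intro psubset_card_mono) auto
qed

lemma rank_less_iff: assumes "q < n" "q' < n" shows "rank q < rank q' \<longleftrightarrow> rot q < rot q'"
proof
  assume less: "rank q < rank q'"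
  show "rot q < rot q'"
  proof (rule ccontr)
    assume "\<not> rot q < rot q'"
    then consider "rot q' < rot q" | "rot q' = rot q" by fastforce
    then show False
      using less rank_strict_mono[OF assms(2,1)] rot_inj[OF assms(2,1)] by cases auto
  qed
qed (rule rank_strict_mono[OF assms])

lemma rank_le_iff: "q < n \<Longrightarrow> q' < n \<Longrightarrow> rank q \<le> rank q' \<longleftrightarrow> rot q \<le> rot q'"
  using rank_less_iff[of q' q] by (simp add: not_less[symmetric])

lemma rank_inj: assumes "q < n" "q' < n" "rank q = rank q'" shows "q = q'"
proof -
  have "rot q = rot q'"
    using rank_le_iff[OF assms(1,2)] rank_le_iff[OF assms(2,1)] assms(3) by simp
  then show ?thesis using rot_inj assms by auto
qed

lemma bij_betw_rank: "bij_betw rank {..<n} {..<n}"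
proof -
  have inj: "inj_on rank {..<n}" using rank_inj by (auto simp: inj_on_def)
  moreover have "rank ` {..<n} \<subseteq> {..<n}" using rank_lt by auto
  moreover have "card (rank ` {..<n}) = n" using inj by (simp add: card_image)
  ultimately show ?thesis by (simp add: bij_betw_def card_subset_eq)
qed

definition unrank :: "nat \<Rightarrow> nat" where "unrank r = (THE q. q < n \<and> rank q = r)"

lemma unrank: assumes "r < n" shows "unrank r < n" "rank (unrank r) = r"
proof -
  obtain q where q: "q < n" "rank q = r"
    using bij_betw_rank assms unfolding bij_betw_def by (metis imageE lessThan_iff)
  have "unrank r = q" unfolding unrank_def using q rank_inj by blast
  then show "unrank r < n" "rank (unrank r) = r" using q by auto
qed

lemma unrank_eqI: "q < n \<Longrightarrow> rank q = r \<Longrightarrow> unrank r = q"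
  using unrank[of "rank q"] rank_lt rank_inj by metis

definition n_below :: "'a \<Rightarrow> nat" where "n_below a = card {y. y < n \<and> w!y < a}"
definition n_occ :: "'a \<Rightarrow> nat" where "n_occ a = card {y. y < n \<and> w!y = a}"
definition n_above :: "'a \<Rightarrow> nat" where "n_above a = card {y. y < n \<and> a < w!y}"

lemma n_below_occ_above: "n_below a + n_occ a + n_above a = n"
proof -
  have "{y. y < n \<and> w!y < a} \<union> {y. y < n \<and> w!y = a} \<union> {y. y < n \<and> a < w!y} = {..<n}"
    by auto
  moreover have "card ({y. y < n \<and> w!y < a} \<union> {y. y < n \<and> w!y = a} \<union> {y. y < n \<and> a < w!y})
     = n_below a + n_occ a + n_above a"
    unfolding n_below_def n_occ_def n_above_def
    by (subst card_Un_disjoint, simp, simp, force, subst card_Un_disjoint, auto)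
  ultimately show ?thesis by simp
qed

lemma n_occ_pos: "a \<in> set w \<Longrightarrow> 0 < n_occ a"
  unfolding n_occ_def by (auto simp: card_gt_0_iff in_set_conv_nth)

lemma n_below_mono: "a < b \<Longrightarrow> n_below a + n_occ a \<le> n_below b"
proof -
  assume "a < b"
  then have "{y. y < n \<and> w!y < a} \<union> {y. y < n \<and> w!y = a} \<subseteq> {y. y < n \<and> w!y < b}" by auto
  then have "card ({y. y < n \<and> w!y < a} \<union> {y. y < n \<and> w!y = a}) \<le> n_below b"
    unfolding n_below_def by (intro card_mono) auto
  then show ?thesis unfolding n_below_def n_occ_def by (subst (asm) card_Un_disjoint) auto
qed

lemma n_above_antimono: "a < b \<Longrightarrow> n_above b + n_occ b \<le> n_above a"
proof -
  assume "a < b"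
  then have "{y. y < n \<and> b < w!y} \<union> {y. y < n \<and> w!y = b} \<subseteq> {y. y < n \<and> a < w!y}" by auto
  then have "card ({y. y < n \<and> b < w!y} \<union> {y. y < n \<and> w!y = b}) \<le> n_above a"
    unfolding n_above_def by (intro card_mono) auto
  then show ?thesis unfolding n_above_def n_occ_def by (subst (asm) card_Un_disjoint) auto
qed

lemma below_block_unique:
  "n_below a \<le> r \<Longrightarrow> r < n_below a + n_occ a \<Longrightarrow> n_below b \<le> r \<Longrightarrow> r < n_below b + n_occ b \<Longrightarrow> a = b"
  using n_below_mono by (metis leD le_trans linorder_neqE not_less)

lemma above_block_unique:
  "n_above a \<le> r \<Longrightarrow> r < n_above a + n_occ a \<Longrightarrow> n_above b \<le> r \<Longrightarrow> r < n_above b + n_occ b \<Longrightarrow> a = b"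
  using n_above_antimono by (metis leD le_trans linorder_neqE not_less)

lemma rank_eq_n_below_plus:
  assumes "y < n"
  shows "rank y = n_below (w!y) + card {u. u < n \<and> w!u = w!y \<and> rot u < rot y}"
proof -
  have "{u. u < n \<and> rot u < rot y}
      = {u. u < n \<and> w!u < w!y} \<union> {u. u < n \<and> w!u = w!y \<and> rot u < rot y}"
    using rot_less_if_first_less[OF _ assms] rot_less_if_first_less[OF assms]
    by (auto simp: not_less_iff_gr_or_eq) (metis order.asym)
  then have "rank y = card ({u. u < n \<and> w!u < w!y} \<union> {u. u < n \<and> w!u = w!y \<and> rot u < rot y})"
    unfolding rank_def by simp
  then show ?thesis unfolding n_below_def by (subst (asm) card_Un_disjoint) auto
qed

lemma rank_first_letter_block:
  assumes "y < n"
  shows "n_below (w!y) \<le> rank y" "rank y < n_below (w!y) + n_occ (w!y)"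
proof -
  have "{u. u < n \<and> w!u = w!y \<and> rot u < rot y} \<subset> {u. u < n \<and> w!u = w!y}"
    using assms by auto
  then have "card {u. u < n \<and> w!u = w!y \<and> rot u < rot y} < n_occ (w!y)"
    unfolding n_occ_def by (intro psubset_card_mono) auto
  then show "n_below (w!y) \<le> rank y" "rank y < n_below (w!y) + n_occ (w!y)"
    using rank_eq_n_below_plus[OF assms] by simp_all
qed

lemma L_sorted: "sorted_wrt (<) L" by (simp add: letters_def)
lemma L_set: "set L = set w" by (simp add: letters_def)
lemma L_distinct: "distinct L" by (simp add: letters_def)

lemma k_pos: "0 < k"
  using length_pos L_set by (metis length_greater_0_conv set_empty)

lemma L_less_iff: "i < k \<Longrightarrow> j < k \<Longrightarrow> L!i < L!j \<longleftrightarrow> i < j"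
  using sorted_wrt_nth_less[OF L_sorted] by (metis linorder_neqE_nat order.asym order.irrefl)

lemma L_eq_iff: "i < k \<Longrightarrow> j < k \<Longrightarrow> L!i = L!j \<longleftrightarrow> i = j"
  using L_distinct by (simp add: nth_eq_iff_index_eq)

lemma nth_letter_index: "y < n \<Longrightarrow> \<exists>i<k. w!y = L!i"
  using L_set by (metis in_set_conv_nth nth_mem)

lemma L_in: "i < k \<Longrightarrow> L!i \<in> set w"
  using L_set nth_mem by metis

lemma n_occ_L_pos: "i < k \<Longrightarrow> 0 < n_occ (L!i)"
  using n_occ_pos L_in by blast

lemma n_below_L_lt: "i < k \<Longrightarrow> n_below (L!i) < n"
  using n_below_occ_above[of "L!i"] n_occ_L_pos[of i] by linarith

lemma n_below_Suc: assumes "Suc i < k" shows "n_below (L!Suc i) = n_below (L!i) + n_occ (L!i)"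
proof -
  have "w!y < L!Suc i \<longleftrightarrow> w!y < L!i \<or> w!y = L!i" if y: "y < n" for y
  proof -
    obtain j where j: "j < k" "w!y = L!j" using nth_letter_index[OF y] by blast
    have "L!j < L!Suc i \<longleftrightarrow> j < Suc i" using L_less_iff j(1) assms by blast
    moreover have "L!j < L!i \<longleftrightarrow> j < i" using L_less_iff j(1) assms by simp
    moreover have "L!j = L!i \<longleftrightarrow> j = i" using L_eq_iff j(1) assms by simp
    ultimately show ?thesis using j(2) by auto
  qed
  then have "{y. y < n \<and> w!y < L!Suc i} = {y. y < n \<and> w!y < L!i} \<union> {y. y < n \<and> w!y = L!i}"
    by auto
  also have "card \<dots> = n_below (L!i) + n_occ (L!i)"
    unfolding n_below_def n_occ_def by (rule card_Un_disjoint) auto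
  finally show ?thesis unfolding n_below_def .
qed

lemma n_below_0: "n_below (L!0) = 0"
proof -
  have "w!y < L!0 \<Longrightarrow> y < n \<Longrightarrow> False" for y
    using nth_letter_index L_less_iff k_pos by (metis less_nat_zero_code neq0_conv)
  then show ?thesis by (auto simp: n_below_def)
qed

lemma letter_unrank:
  assumes "i < k" "n_below (L!i) \<le> r" "r < n_below (L!i) + n_occ (L!i)"
  shows "w ! unrank r = L!i"
proof -
  have r: "r < n" using assms(3) n_below_occ_above[of "L!i"] by linarith
  have "n_below (w ! unrank r) \<le> r" "r < n_below (w ! unrank r) + n_occ (w ! unrank r)"
    using rank_first_letter_block[OF unrank(1)[OF r]] unrank(2)[OF r] by simp_all
  then show ?thesis using below_block_unique assms(2,3) by blast
qed

end

section \<open>Perfectly clustering Lyndon words\<close>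

locale perfectly_clustering_lyndon = primitive_word +
  assumes lyndon_w: "lyndon w" and clustering_w: "perfectly_clustering w"
begin

lemma last_rot_antimono:
  assumes "u < n" "v < n" "rot u < rot v"
  shows "last (rot v) \<le> last (rot u)"
proof -
  let ?S = "sorted_list_of_set (conjugates w)"
  have fin: "finite (conjugates w)" using conjugates_eq_rot by simp
  have bw_sorted: "sorted_wrt (\<ge>) (map last ?S)"
    using clustering_w unfolding perfectly_clustering_def bw_def by auto
  have S_sorted: "sorted_wrt (<) ?S" using fin by simp
  obtain i where i: "i < length ?S" "?S ! i = rot u"
    using rot_in_conjugates[OF assms(1)] fin by (metis in_set_conv_nth set_sorted_list_of_set)
  obtain j where j: "j < length ?S" "?S ! j = rot v"
    using rot_in_conjugates[OF assms(2)] fin by (metis in_set_conv_nth set_sorted_list_of_set)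
  have "i < j"
  proof (rule ccontr)
    assume "\<not> i < j"
    then have "rot v \<le> rot u"
      using sorted_wrt_nth_less[OF S_sorted, of j i] i j by (cases "i = j") auto
    then show False using assms(3) by simp
  qed
  then show ?thesis
    using sorted_wrt_nth_less[OF bw_sorted, of i j] i j by simp
qed

lemma last_rot_cnext: "q < n \<Longrightarrow> last (rot (cnext q)) = w ! q"
  using last_rot[OF cnext_lt] cprev_cnext by simp

lemma rot_cnext_less_rot_cnext_iff:
  assumes v: "v < n" and y: "y < n"
  shows "rot (cnext v) < rot (cnext y) \<longleftrightarrow> w!y < w!v \<or> (w!v = w!y \<and> rot v < rot y)"
proof (cases "w!v = w!y")
  case True
  then show ?thesis using rot_less_iff_rot_cnext_less[OF v y] by simp
next
  case False
  have le_if_less: "w!b \<le> w!a" if "a < n" "b < n" "rot (cnext a) < rot (cnext b)" for a b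
    using last_rot_antimono[OF cnext_lt cnext_lt that(3)] last_rot_cnext that(1,2) by simp
  show ?thesis
  proof
    assume "rot (cnext v) < rot (cnext y)"
    then show "w!y < w!v \<or> (w!v = w!y \<and> rot v < rot y)"
      using le_if_less[OF v y] False by auto
  next
    assume "w!y < w!v \<or> (w!v = w!y \<and> rot v < rot y)"
    then have "\<not> rot (cnext y) \<le> rot (cnext v)"
      using le_if_less[OF y v] False rot_inj[OF cnext_lt cnext_lt] cnext_inj[OF v y]
      by (auto simp: order.order_iff_strict)
    then show "rot (cnext v) < rot (cnext y)" by simp
  qed
qed

lemma rank_cnext_eq_n_above_plus:
  assumes "y < n"
  shows "rank (cnext y) = n_above (w!y) + card {u. u < n \<and> w!u = w!y \<and> rot u < rot y}"
proof -
  let ?A = "{v. v < n \<and> w!y < w!v}" and ?B = "{v. v < n \<and> w!v = w!y \<and> rot v < rot y}"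
  have "{u. u < n \<and> rot u < rot (cnext y)} = cnext ` {v. v < n \<and> rot (cnext v) < rot (cnext y)}"
    by (rule Collect_eq_cnext_image)
  also have "{v. v < n \<and> rot (cnext v) < rot (cnext y)} = ?A \<union> ?B"
    using rot_cnext_less_rot_cnext_iff assms by auto
  finally have "rank (cnext y) = card (cnext ` (?A \<union> ?B))" by (simp add: rank_def)
  also have "\<dots> = card (?A \<union> ?B)" by (rule card_cnext_image) auto
  also have "\<dots> = n_above (w!y) + card ?B" unfolding n_above_def by (rule card_Un_disjoint) auto
  finally show ?thesis .
qed

text \<open>The rotations ending with a letter \<open>a\<close> form a block of the sorted conjugates, so shifting
  a rotation starting with \<open>a\<close> by one position moves its rank from the \<open>a\<close>-block of first letters
  to the \<open>a\<close>-block of last letters.\<close>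

lemma rank_cnext: "y < n \<Longrightarrow> rank (cnext y) + n_below (w!y) = rank y + n_above (w!y)"
  using rank_cnext_eq_n_above_plus rank_eq_n_below_plus by simp

lemma rank_last_letter_block:
  assumes "y < n"
  shows "n_above (w ! cprev y) \<le> rank y" "rank y < n_above (w ! cprev y) + n_occ (w ! cprev y)"
proof -
  have "rank y + n_below (w ! cprev y) = rank (cprev y) + n_above (w ! cprev y)"
    using rank_cnext[OF cprev_lt, of y] cnext_cprev[OF assms] by simp
  then show "n_above (w ! cprev y) \<le> rank y" "rank y < n_above (w ! cprev y) + n_occ (w ! cprev y)"
    using rank_first_letter_block[OF cprev_lt, of y] by linarith+
qed

lemma rank_0: "rank 0 = 0"
  using lyndon_le_rotate[OF lyndon_w] by (auto simp: rank_def rot_def not_less[symmetric])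

definition start :: "nat \<Rightarrow> nat" where "start i = unrank (n_below (L!i))"

lemma start_lt: "i < k \<Longrightarrow> start i < n"
  using unrank n_below_L_lt by (simp add: start_def)

lemma rank_start: "i < k \<Longrightarrow> rank (start i) = n_below (L!i)"
  using unrank n_below_L_lt by (simp add: start_def)

lemma letter_start: "i < k \<Longrightarrow> w ! start i = L!i"
  using letter_unrank n_occ_L_pos by (simp add: start_def)

lemma start_inj: "i < k \<Longrightarrow> j < k \<Longrightarrow> start i = start j \<Longrightarrow> i = j"
  using letter_start L_eq_iff by metis

lemma rank_eq_n_below_iff: assumes "q < n" shows "rank q = n_below (w!q) \<longleftrightarrow> (\<exists>i<k. q = start i)"
proof
  assume rank_q: "rank q = n_below (w!q)"
  obtain i where i: "i < k" "w!q = L!i" using nth_letter_index assms by blast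
  then have "q = start i" using rank_q rank_start start_lt rank_inj assms by metis
  then show "\<exists>i<k. q = start i" using i by blast
qed (use rank_start letter_start in auto)

lemma start_0: "start 0 = 0"
  using rank_start[of 0] k_pos n_below_0 rank_0 start_lt rank_inj length_pos by metis

lemma start_last: "start (k - 1) = n - 1"
proof -
  let ?y = "n - 1"
  have y: "?y < n" using length_pos by simp
  have "cnext ?y = 0" using length_pos by (simp add: cnext_def)
  then have "n_below (w!?y) = rank ?y + n_above (w!?y)" using rank_cnext[OF y] rank_0 by simp
  then have no_above: "n_above (w!?y) = 0" and rank_y: "rank ?y = n_below (w!?y)"
    using rank_first_letter_block[OF y] by linarith+
  obtain j where j: "j < k" "w!?y = L!j" using nth_letter_index y by blast
  have "\<not> j < k - 1"
  proof
    assume "j < k - 1"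
    then have "n_above (L!(k-1)) + n_occ (L!(k-1)) \<le> n_above (L!j)"
      using L_less_iff j n_above_antimono by simp
    then show False using no_above j n_occ_L_pos[of "k-1"] k_pos by simp
  qed
  then have "j = k - 1" using j(1) by simp
  then have "rank ?y = rank (start (k-1))" using rank_y j rank_start by simp
  then show ?thesis using rank_inj y start_lt k_pos by (metis diff_less zero_less_one)
qed

definition max_pos :: nat where "max_pos = unrank (n - 1)"

lemma max_pos: "max_pos < n" "rank max_pos = n - 1"
  using unrank length_pos by (auto simp: max_pos_def)

definition mirror :: "nat \<Rightarrow> nat" where "mirror q = (max_pos + n - q) mod n"

lemma mirror_lt: "mirror q < n"
  using length_pos by (simp add: mirror_def)

lemma cprev_mirror: assumes "q < n" shows "cprev (mirror q) = (max_pos + 2*n - 1 - q) mod n"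
proof -
  have "cprev (mirror q) = ((max_pos + n - q) mod n + (n - 1)) mod n"
    by (simp add: cprev_eq mirror_def)
  also have "\<dots> = (max_pos + n - q + (n - 1)) mod n" by (simp add: mod_add_left_eq)
  also have "max_pos + n - q + (n - 1) = max_pos + 2*n - 1 - q" using assms by simp
  finally show ?thesis .
qed

lemma mirror_cnext: assumes "q < n" shows "mirror (cnext q) = cprev (mirror q)"
proof (cases "Suc q < n")
  case True
  then have "max_pos + 2*n - 1 - q = (max_pos + n - cnext q) + n" using cnext_Suc by simp
  then show ?thesis using cprev_mirror[OF assms] by (simp add: mirror_def)
next
  case False
  then have "Suc q = n" using assms by simp
  then have "cnext q = 0" by (simp add: cnext_def)
  then show ?thesis using cprev_mirror[OF assms] \<open>Suc q = n\<close> by (simp add: mirror_def mult_2)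
qed

lemma letter_cprev_mirror_if_rank_mirror:
  assumes "q < n" "rank (mirror q) = n - 1 - rank q"
  shows "w ! cprev (mirror q) = w ! q"
proof -
  have "n_above (w!q) \<le> rank (mirror q)" "rank (mirror q) < n_above (w!q) + n_occ (w!q)"
    using rank_first_letter_block[OF assms(1)] n_below_occ_above[of "w!q"] assms(2) by linarith+
  then show ?thesis
    using rank_last_letter_block[OF mirror_lt] above_block_unique by blast
qed

text \<open>\<open>rank_cnext\<close> applied at \<open>q\<close> and at \<open>cprev (mirror q)\<close>, which carry the same letter,
  changes the two ranks by opposite amounts.\<close>

lemma rank_mirror: "q < n \<Longrightarrow> rank (mirror q) = n - 1 - rank q"
proof (induction q)
  case 0
  then show ?case using max_pos rank_0 by (simp add: mirror_def)
next
  case (Suc q)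
  then have q: "q < n" by simp
  have IH: "rank (mirror q) = n - 1 - rank q" using Suc q by simp
  let ?a = "w!q"
  have "rank (mirror q) + n_below ?a = rank (cprev (mirror q)) + n_above ?a"
    using rank_cnext[OF cprev_lt, of "mirror q"] cnext_cprev[OF mirror_lt]
      letter_cprev_mirror_if_rank_mirror[OF q IH] by simp
  moreover have "rank (Suc q) + n_below ?a = rank q + n_above ?a"
    using rank_cnext[OF q] cnext_Suc[OF Suc.prems] by simp
  moreover have "rank q < n" "rank (Suc q) < n" using rank_lt q Suc.prems by auto
  ultimately have "rank (cprev (mirror q)) = n - 1 - rank (Suc q)" using IH by linarith
  then show ?case using mirror_cnext[OF q] cnext_Suc[OF Suc.prems] by simp
qed

lemma letter_cprev_mirror: "q < n \<Longrightarrow> w ! cprev (mirror q) = w ! q"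
  using letter_cprev_mirror_if_rank_mirror rank_mirror by blast

subsection \<open>Chains of complementary ranks\<close>

lemma Suc_start_lt: assumes "Suc i < k" shows "Suc (start i) < n"
proof -
  have "start i \<noteq> start (k - 1)"
  proof
    assume "start i = start (k - 1)"
    then have "i = k - 1" using start_inj[of i "k - 1"] assms by simp
    then show False using assms by simp
  qed
  then show ?thesis using start_lt[of i] start_last assms by simp
qed

lemma rank_after_start: assumes "Suc i < k" shows "rank (Suc (start i)) + rank (start (Suc i)) = n"
proof -
  have i: "i < k" using assms by simp
  have "rank (cnext (start i)) + n_below (L!i) = rank (start i) + n_above (L!i)"
    using rank_cnext[OF start_lt[OF i]] letter_start[OF i] by simp
  then have "rank (Suc (start i)) = n_above (L!i)"
    using cnext_Suc[OF Suc_start_lt[OF assms]] rank_start[OF i] by simp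
  moreover have "rank (start (Suc i)) = n_below (L!i) + n_occ (L!i)"
    using rank_start assms n_below_Suc by simp
  ultimately show ?thesis using n_below_occ_above[of "L!i"] by simp
qed

lemma rank_after_start_inv:
  assumes "q < n" "Suc j < k" "rank q + rank (start (Suc j)) = n"
  shows "q = Suc (start j)"
  using rank_after_start[OF assms(2)] assms rank_inj Suc_start_lt by simp

definition is_start :: "nat \<Rightarrow> bool" where "is_start q \<longleftrightarrow> (\<exists>j<k. q = start j)"

lemma is_start_iff_rank: "q < n \<Longrightarrow> is_start q \<longleftrightarrow> rank q = n_below (w!q)"
  using rank_eq_n_below_iff by (simp add: is_start_def)

lemma is_start_start: "i < k \<Longrightarrow> is_start (start i)"
  unfolding is_start_def by blast

text \<open>As \<open>q\<close> is not a start position, \<open>rank q' = n - rank q\<close> falls into the block of the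
  rotations ending with \<open>w!q\<close>; then \<open>rank_cnext\<close> moves both ranks by the same amount in opposite
  directions.\<close>

lemma complement_step:
  assumes q: "q < n" and q': "q' < n" and sum: "rank q + rank q' = n"
    and not_start: "\<not> is_start q" and Suc_q: "Suc q < n"
  shows "0 < q'" "rank (Suc q) + rank (q' - 1) = n" "w ! (q' - 1) = w ! q"
proof -
  let ?a = "w!q"
  have "rank q \<noteq> n_below ?a" using not_start is_start_iff_rank q by simp
  then have above_block: "n_above ?a \<le> rank q'" "rank q' < n_above ?a + n_occ ?a"
    using rank_first_letter_block[OF q] sum n_below_occ_above[of ?a] by linarith+
  have "rank q' \<noteq> 0" using sum rank_lt[OF q] by linarith
  then show q'_pos: "0 < q'" using rank_0 by (metis gr0I)
  have cprev_q': "cprev q' = q' - 1" using cprev_pos q'_pos q' by simp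
  have letter: "w ! cprev q' = ?a"
    using above_block rank_last_letter_block[OF q'] above_block_unique by blast
  then show "w ! (q' - 1) = w ! q" using cprev_q' by simp
  have "rank q' + n_below ?a = rank (q' - 1) + n_above ?a"
    using rank_cnext[OF cprev_lt, of q'] letter cnext_cprev[OF q'] cprev_q' by simp
  moreover have "rank (Suc q) + n_below ?a = rank q + n_above ?a"
    using rank_cnext[OF q] cnext_Suc[OF Suc_q] by simp
  ultimately show "rank (Suc q) + rank (q' - 1) = n" using sum by linarith
qed

definition next_start :: "nat \<Rightarrow> nat" where "next_start i = (LEAST p. start i < p \<and> is_start p)"

lemma next_start:
  assumes "Suc i < k"
  shows "start i < next_start i" "is_start (next_start i)" "next_start i < n"
    "\<And>p. start i < p \<Longrightarrow> p < next_start i \<Longrightarrow> \<not> is_start p"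
proof -
  have "is_start (start (k - 1))" using is_start_start k_pos by simp
  then have "start i < start (k - 1) \<and> is_start (start (k - 1))"
    using start_last Suc_start_lt[OF assms] by simp
  then show "start i < next_start i" "is_start (next_start i)"
    unfolding next_start_def by (metis (mono_tags, lifting) LeastI)+
  then show "next_start i < n" using start_lt unfolding is_start_def by auto
  show "\<And>p. start i < p \<Longrightarrow> p < next_start i \<Longrightarrow> \<not> is_start p"
    unfolding next_start_def using not_less_Least by blast
qed

lemma complement_chain:
  assumes i: "Suc i < k" and m: "start i + 1 + m \<le> next_start i"
  shows "m \<le> start (Suc i) \<and> rank (start i + 1 + m) + rank (start (Suc i) - m) = n"
  using m
proof (induction m)
  case 0
  then show ?case using rank_after_start[OF i] by simp
next
  case (Suc m)
  let ?q = "start i + 1 + m" and ?q' = "start (Suc i) - m"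
  have IH: "m \<le> start (Suc i)" "rank ?q + rank ?q' = n" using Suc by auto
  have "?q < next_start i" using Suc.prems by simp
  then have "\<not> is_start ?q" "?q < n" "Suc ?q < n"
    using next_start[OF i] Suc.prems by auto
  moreover have "?q' < n" using start_lt[of "Suc i"] i by linarith
  ultimately have "0 < ?q'" "rank (Suc ?q) + rank (?q' - 1) = n"
    using complement_step IH(2) by blast+
  then show ?case by (simp add: diff_Suc)
qed

lemma complement_chain_letter:
  assumes i: "Suc i < k" and m: "start i + 1 + m < next_start i"
  shows "w ! (start (Suc i) - m - 1) = w ! (start i + 1 + m)"
proof -
  let ?q = "start i + 1 + m" and ?q' = "start (Suc i) - m"
  have "rank ?q + rank ?q' = n" using complement_chain[OF i] m by auto
  moreover have "\<not> is_start ?q" "?q < n" "Suc ?q < n" using next_start[OF i] m by auto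
  moreover have "?q' < n" using start_lt[of "Suc i"] i by linarith
  ultimately have "w ! (?q' - 1) = w ! ?q" by (intro complement_step(3)) auto
  then show ?thesis by simp
qed

lemma complement_not_start:
  assumes i: "Suc i < k" and m: "0 < m" "start i + 1 + m \<le> next_start i"
  shows "\<not> is_start (start (Suc i) - m)"
proof
  assume "is_start (start (Suc i) - m)"
  then obtain j where j: "j < k" "start (Suc i) - m = start j" unfolding is_start_def by auto
  have chain: "rank (start i + 1 + m) + rank (start j) = n"
    using complement_chain[OF i m(2)] j by auto
  have q: "start i + 1 + m < n" using m next_start(3)[OF i] by simp
  have "j \<noteq> 0"
  proof
    assume "j = 0"
    then have "rank (start j) = 0" using rank_start n_below_0 k_pos by simp
    then show False using chain rank_lt[OF q] by simp
  qed
  then obtain j' where j': "j = Suc j'" using not0_implies_Suc by blast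
  then have "start i + 1 + m = Suc (start j')" using rank_after_start_inv[OF q] j chain by simp
  then have "start i < start j'" "start j' < next_start i" using m by auto
  moreover have "is_start (start j')" using is_start_start j j' by simp
  ultimately show False using next_start(4)[OF i] by blast
qed

lemma next_start_complement:
  assumes i: "Suc i < k"
  shows "\<exists>j. Suc j < k \<and> next_start i = start (Suc j)
           \<and> start (Suc i) - (next_start i - start i - 1) = Suc (start j)"
proof -
  let ?l = "next_start i - start i - 1"
  obtain j where j: "j < k" "next_start i = start j"
    using next_start(2)[OF i] unfolding is_start_def by auto
  have "j \<noteq> 0" using j start_0 next_start(1)[OF i] by (metis not_less0)
  then obtain j' where j': "j = Suc j'" using not0_implies_Suc by blast
  have "start i + 1 + ?l = next_start i" using next_start(1)[OF i] by simp
  then have "rank (start (Suc i) - ?l) + rank (start (Suc j')) = n"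
    using complement_chain[OF i, of ?l] j j' by (simp add: add.commute)
  moreover have "start (Suc i) - ?l < n" using start_lt[of "Suc i"] i by linarith
  ultimately have "start (Suc i) - ?l = Suc (start j')" using rank_after_start_inv j j' by simp
  then show ?thesis using j j' by auto
qed

text \<open>The places where a chain of complementary pairs \<open>(q, q')\<close> can close up: \<open>q' = q\<close> or
  \<open>q' = q + 1\<close>.\<close>

definition center :: "nat \<Rightarrow> bool" where
  "center c \<longleftrightarrow> 0 < c \<and> c < n \<and> (2 * rank c = n \<or> (Suc c < n \<and> rank c + rank (Suc c) = n))"

lemma center_complement:
  assumes "center c" "q < n" "rank c + rank q = n"
  shows "q = c \<or> (q = Suc c \<and> Suc c < n)"
proof (cases "2 * rank c = n")
  case True
  then have "rank q = rank c" using assms(3) by simp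
  then show ?thesis using rank_inj assms(1,2) unfolding center_def by blast
next
  case False
  then have "Suc c < n" "rank q = rank (Suc c)" using assms unfolding center_def by auto
  then show ?thesis using rank_inj assms(2) by blast
qed

lemma rank_cnext_sum:
  assumes "q < n"
  shows "rank q + rank (cnext q) = n \<longleftrightarrow> 2 * rank q = 2 * n_below (w!q) + n_occ (w!q)"
    "rank q + rank (cnext q) + 1 = n \<longleftrightarrow> 2 * rank q + 1 = 2 * n_below (w!q) + n_occ (w!q)"
  using rank_cnext[OF assms] rank_first_letter_block(1)[OF assms] n_below_occ_above[of "w!q"]
  by linarith+

lemma sum_n_occ: "(\<Sum>i<k. n_occ (L!i)) = n"
proof -
  let ?A = "\<lambda>i. {y. y < n \<and> w!y = L!i}"
  have "(\<Union>i\<in>{..<k}. ?A i) = {..<n}" using nth_letter_index by auto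
  moreover have "card (\<Union>i\<in>{..<k}. ?A i) = (\<Sum>i<k. card (?A i))"
    by (rule card_UN_disjoint) (auto simp: L_eq_iff)
  ultimately show ?thesis by (simp add: n_occ_def)
qed

definition mid_pos :: "nat \<Rightarrow> nat" where "mid_pos i = unrank (n_below (L!i) + n_occ (L!i) div 2)"

lemma mid_pos:
  assumes "i < k"
  shows "mid_pos i < n" "rank (mid_pos i) = n_below (L!i) + n_occ (L!i) div 2" "w ! mid_pos i = L!i"
proof -
  have "0 < n_occ (L!i)" using n_occ_L_pos assms by simp
  moreover have r: "n_below (L!i) + n_occ (L!i) div 2 < n" using n_below_occ_above[of "L!i"] calculation by linarith
  ultimately show "mid_pos i < n" "rank (mid_pos i) = n_below (L!i) + n_occ (L!i) div 2" "w ! mid_pos i = L!i"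
    using unrank[OF r] letter_unrank[OF assms] by (auto simp: mid_pos_def)
qed

lemma mid_pos_inj: "i < k \<Longrightarrow> j < k \<Longrightarrow> mid_pos i = mid_pos j \<Longrightarrow> i = j"
  using mid_pos(3) L_eq_iff by metis

definition even_letters where "even_letters = {i. i < k \<and> even (n_occ (L!i))}"
definition odd_letters where "odd_letters = {i. i < k \<and> odd (n_occ (L!i))}"

definition self_complementary where
  "self_complementary = {c. 0 < c \<and> c < n \<and> 2 * rank c = n}"
definition adjacent_complementary where
  "adjacent_complementary = {c. 0 < c \<and> Suc c < n \<and> rank c + rank (Suc c) = n}"
definition near_complementary where
  "near_complementary = {q. q < n \<and> rank q + rank (cnext q) + 1 = n}"

lemma card_self_complementary: "card self_complementary = (if even n then 1 else 0)"
proof (cases "even n")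
  case True
  then obtain h where h: "n = 2*h" by blast
  then have "0 < h" "h < n" using length_pos by auto
  then have "unrank h \<noteq> 0" using unrank(2)[of h] rank_0 by (metis less_irrefl)
  have "self_complementary = {unrank h}"
  proof (intro set_eqI iffI)
    fix c assume "c \<in> self_complementary"
    then have "c < n" "rank c = h" using h by (auto simp: self_complementary_def)
    then show "c \<in> {unrank h}" using unrank_eqI by simp
  next
    fix c assume "c \<in> {unrank h}"
    then show "c \<in> self_complementary"
      using unrank[OF \<open>h < n\<close>] \<open>unrank h \<noteq> 0\<close> h by (simp add: self_complementary_def)
  qed
  then show ?thesis using True by simp
next
  case False
  then have "self_complementary = {}" by (auto simp: self_complementary_def dest: sym)
  then show ?thesis using False by simp
qed

lemma adjacent_complementary_eq: "adjacent_complementary = mid_pos ` even_letters"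
proof (intro set_eqI iffI)
  fix c assume "c \<in> adjacent_complementary"
  then have c: "0 < c" "Suc c < n" "rank c + rank (cnext c) = n"
    by (auto simp: adjacent_complementary_def cnext_Suc)
  obtain i where i: "i < k" "w!c = L!i" using nth_letter_index[of c] c(2) by auto
  have sum: "2 * rank c = 2 * n_below (L!i) + n_occ (L!i)" using rank_cnext_sum(1)[of c] c i by simp
  then have even: "even (n_occ (L!i))" by (metis dvd_add_right_iff dvd_triv_left)
  then have "rank c = n_below (L!i) + n_occ (L!i) div 2" using sum by auto
  then have "c = mid_pos i" using mid_pos[OF i(1)] c rank_inj by (metis Suc_lessD)
  then show "c \<in> mid_pos ` even_letters" using i even by (auto simp: even_letters_def)
next
  fix c assume "c \<in> mid_pos ` even_letters"
  then obtain i where i: "i < k" "even (n_occ (L!i))" "c = mid_pos i" by (auto simp: even_letters_def)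
  have two: "2 \<le> n_occ (L!i)" using i(2) n_occ_L_pos[OF i(1)] by presburger
  have m: "c < n" "rank c = n_below (L!i) + n_occ (L!i) div 2" "w!c = L!i" using mid_pos i by auto
  have "c \<noteq> 0" using rank_0 m two by (metis add_is_0 div_greater_zero_iff less_numeral_extra(3) zero_less_numeral)
  moreover have "c \<noteq> n - 1"
  proof
    assume "c = n - 1"
    then have "c = start (k - 1)" using start_last by simp
    then have "L!i = L!(k-1)" "rank c = n_below (L!(k-1))" using letter_start rank_start k_pos m by auto
    then show False using m two by simp
  qed
  then have "Suc c < n" using m by linarith
  moreover have "rank c + rank (cnext c) = n" using rank_cnext_sum(1)[of c] m i(2) by auto
  ultimately show "c \<in> adjacent_complementary" by (simp add: adjacent_complementary_def cnext_Suc)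
qed

lemma near_complementary_eq: "near_complementary = mid_pos ` odd_letters"
proof (intro set_eqI iffI)
  fix c assume "c \<in> near_complementary"
  then have c: "c < n" "rank c + rank (cnext c) + 1 = n" by (auto simp: near_complementary_def)
  obtain i where i: "i < k" "w!c = L!i" using nth_letter_index c by auto
  have sum: "2 * rank c + 1 = 2 * n_below (L!i) + n_occ (L!i)" using rank_cnext_sum(2)[of c] c i by simp
  then have odd: "odd (n_occ (L!i))" by presburger
  then have "rank c = n_below (L!i) + n_occ (L!i) div 2" using sum by presburger
  then have "c = mid_pos i" using mid_pos[OF i(1)] c rank_inj by metis
  then show "c \<in> mid_pos ` odd_letters" using i odd by (auto simp: odd_letters_def)
next
  fix c assume "c \<in> mid_pos ` odd_letters"
  then obtain i where i: "i < k" "odd (n_occ (L!i))" "c = mid_pos i" by (auto simp: odd_letters_def)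
  have m: "c < n" "rank c = n_below (L!i) + n_occ (L!i) div 2" "w!c = L!i" using mid_pos i by auto
  then have "2 * rank c + 1 = 2 * n_below (w!c) + n_occ (w!c)" using i(2) by presburger
  then show "c \<in> near_complementary" using rank_cnext_sum(2)[of c] m by (simp add: near_complementary_def)
qed

lemma near_complementary_eq_fixed_points:
  "near_complementary = {q. q < n \<and> (max_pos + 2*n - 1 - q) mod n = q}"
proof -
  have "rank q + rank (cnext q) + 1 = n \<longleftrightarrow> cprev (mirror q) = q" if "q < n" for q
  proof -
    have "rank (cprev (mirror q)) = n - 1 - rank (cnext q)"
      using rank_mirror[OF cnext_lt, of q] mirror_cnext[OF that] by simp
    then show ?thesis
      using rank_inj[OF cprev_lt that] rank_lt[OF that] rank_lt[OF cnext_lt, of q] by auto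
  qed
  then show ?thesis by (auto simp: near_complementary_def cprev_mirror)
qed

text \<open>The fixed points of the reflection \<open>cprev \<circ> mirror\<close> of \<open>\<int>/n\<close>: one for odd \<open>n\<close>, two for
  even \<open>n\<close> because then \<open>mirror\<close>, which reverses the ranks, has none.\<close>

lemma even_length_iff: "even n \<longleftrightarrow> even (card odd_letters)"
proof -
  have "{i\<in>{..<k}. odd (n_occ (L!i))} = odd_letters" by (auto simp: odd_letters_def)
  then show ?thesis using sum_n_occ even_sum_iff[of "{..<k}" "\<lambda>i. n_occ (L!i)"] by simp
qed

lemma card_odd_letters: "card odd_letters = (if even n then 2 else 1)"
proof -
  have "card odd_letters = card near_complementary"
    using near_complementary_eq mid_pos_inj by (simp add: card_image inj_on_def odd_letters_def)
  also have "\<dots> = (if even n then 2 else 1)"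
  proof (cases "even n")
    case True
    have "mirror q \<noteq> q" if "q < n" for q
    proof
      assume "mirror q = q"
      then have "2 * rank q + 1 = n" using rank_mirror[OF that] rank_lt[OF that] by simp
      then show False using True by presburger
    qed
    then have "\<forall>q<n. (max_pos + n - q) mod n \<noteq> q" by (simp add: mirror_def)
    then show ?thesis
      using mod_reflect_fixed_points_even[OF True max_pos(1)] True near_complementary_eq_fixed_points
      by simp
  next
    case False
    have "a = b" if "a \<in> near_complementary" "b \<in> near_complementary" for a b
    proof -
      have "a < n" "b < n" "(2*a) mod n = (2*b) mod n"
        using that mod_reflect_fixed_iff[OF length_pos] by (auto simp: near_complementary_eq_fixed_points)
      then show "a = b" using double_mod_inj_odd[OF False] by blast
    qed
    moreover have "finite near_complementary" by (simp add: near_complementary_def)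
    ultimately have "card near_complementary \<le> 1" by (simp add: card_le_Suc0_iff_eq)
    moreover have "odd (card near_complementary)"
      using False even_length_iff \<open>card odd_letters = card near_complementary\<close> by simp
    ultimately show ?thesis using False by presburger
  qed
  finally show ?thesis .
qed

lemma card_centers: "card {c. center c} = k - 1"
proof -
  have "{c. center c} = self_complementary \<union> adjacent_complementary"
    by (auto simp: center_def self_complementary_def adjacent_complementary_def)
  moreover have "self_complementary \<inter> adjacent_complementary = {}"
  proof -
    have False if "c \<in> self_complementary" "c \<in> adjacent_complementary" for c
    proof -
      have "rank (Suc c) = rank c" "Suc c < n"
        using that by (auto simp: self_complementary_def adjacent_complementary_def)
      then show False using rank_inj[of "Suc c" c] by simp
    qed
    then show ?thesis by blast
  qed
  moreover have "finite self_complementary" "finite adjacent_complementary"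
    by (rule finite_subset[of _ "{..<n}"], auto simp: self_complementary_def adjacent_complementary_def)+
  ultimately have "card {c. center c} = card self_complementary + card even_letters"
    using adjacent_complementary_eq mid_pos_inj
    by (simp add: card_Un_disjoint card_image inj_on_def even_letters_def)
  moreover have "even_letters \<union> odd_letters = {..<k}" "even_letters \<inter> odd_letters = {}"
    by (auto simp: even_letters_def odd_letters_def)
  then have "card even_letters + card odd_letters = k"
    by (metis card_Un_disjoint card_lessThan finite_Un finite_lessThan)
  ultimately show ?thesis using card_self_complementary card_odd_letters by (cases "even n") auto
qed

lemma start_Suc_not_before_next_start:
  assumes i: "Suc i < k" and c: "center c" "start i < c" "c \<le> next_start i"
  shows "\<not> start (Suc i) < next_start i"
proof
  assume before: "start (Suc i) < next_start i"
  define m where "m = c - start i - 1"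
  have "m \<le> start (Suc i)" "rank c + rank (start (Suc i) - m) = n"
    using complement_chain[OF i, of m] c by (simp_all add: m_def)
  moreover have "start (Suc i) - m < n" using start_lt[of "Suc i"] i by linarith
  ultimately have "c \<le> start (Suc i) - m" using center_complement[OF c(1)] by fastforce
  then have "start i < start (Suc i)" using c(2) by linarith
  then show False using next_start(4)[OF i] is_start_start[OF i] before by blast
qed

lemma chain_end_le_next_start:
  assumes i: "Suc i < k" and c: "center c" "start i < c" "c \<le> next_start i"
  shows "start (Suc i) - (next_start i - start i - 1) \<le> next_start i"
proof -
  let ?l = "next_start i - start i - 1"
  define m where "m = c - start i - 1"
  obtain j where j: "Suc j < k" "next_start i = start (Suc j)" "start (Suc i) - ?l = Suc (start j)"
    using next_start_complement[OF i] by blast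
  have "m \<le> ?l" using c by (simp add: m_def)
  have "rank c + rank (start (Suc i) - m) = n" using complement_chain[OF i, of m] c by (simp add: m_def)
  moreover have "start (Suc i) - m < n" using start_lt[of "Suc i"] i by linarith
  ultimately have "start (Suc i) - m = c \<or> start (Suc i) - m = Suc c"
    using center_complement[OF c(1)] by blast
  then consider "start (Suc i) - m = c" | "start (Suc i) - m = Suc c" "m < ?l"
    | "start (Suc i) - m = Suc c" "m = ?l"
    using \<open>m \<le> ?l\<close> by linarith
  then show ?thesis
  proof cases
    case 3
    then have "c = next_start i" using c by (simp add: m_def)
    then have "start j = start (Suc j)" using j 3 by simp
    then show ?thesis using start_inj[of j "Suc j"] j(1) by simp
  qed (use c \<open>m \<le> ?l\<close> m_def in linarith)+
qed

lemma next_start_eq_if_center: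
  assumes i: "Suc i < k" and c: "center c" "start i < c" "c \<le> next_start i"
  shows "next_start i = start (Suc i)"
proof -
  have "\<not> next_start i < start (Suc i)"
  proof
    assume "next_start i < start (Suc i)"
    moreover define m where "m = start (Suc i) - next_start i"
    ultimately have "0 < m" "start i + 1 + m \<le> next_start i" "start (Suc i) - m = next_start i"
      using chain_end_le_next_start[OF assms] next_start(1)[OF i] by (auto simp: m_def)
    then show False using complement_not_start[OF i] next_start(2)[OF i] by metis
  qed
  then show ?thesis using start_Suc_not_before_next_start[OF assms] by simp
qed

lemma center_eq_if_symmetric:
  assumes i: "Suc i < k" and symmetric: "next_start i = start (Suc i)"
    and c: "center c" "start i < c" "c \<le> next_start i"
  shows "c = (start i + 1 + next_start i) div 2"
proof -
  let ?d = "start i + 1 + next_start i - c"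
  have "rank c + rank ?d = n"
    using complement_chain[OF i, of "c - start i - 1"] symmetric c by (simp add: add.commute)
  moreover have "?d < n" using c next_start(3)[OF i] by linarith
  ultimately have "?d = c \<or> ?d = Suc c" using center_complement[OF c(1)] by blast
  then show ?thesis using c by linarith
qed

lemma gap_exists:
  assumes "0 < q" "q < n"
  shows "\<exists>i. Suc i < k \<and> start i < q \<and> q \<le> next_start i"
proof -
  define S where "S = {j. j < k \<and> start j < q}"
  have "finite S" "0 \<in> S" using start_0 k_pos assms by (simp_all add: S_def)
  then have "Max (start ` S) \<in> start ` S" by (intro Max_in) auto
  then obtain i where i: "i \<in> S" "start i = Max (start ` S)" by auto
  have max: "start j \<le> start i" if "j \<in> S" for j
    using i(2) \<open>finite S\<close> that by simp
  have "i \<noteq> k - 1"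
  proof
    assume "i = k - 1"
    then have "n - 1 < q" using i(1) start_last by (simp add: S_def)
    then show False using assms by linarith
  qed
  moreover have "i < k" using i(1) by (simp add: S_def)
  ultimately have si: "Suc i < k" by linarith
  have "q \<le> next_start i"
  proof (rule ccontr)
    assume "\<not> q \<le> next_start i"
    moreover obtain j where "j < k" "next_start i = start j"
      using next_start(2)[OF si] unfolding is_start_def by auto
    ultimately show False using max[of j] next_start(1)[OF si] by (simp add: S_def)
  qed
  then show ?thesis using si i(1) by (auto simp: S_def)
qed

definition gap_index :: "nat \<Rightarrow> nat" where
  "gap_index q = (SOME i. Suc i < k \<and> start i < q \<and> q \<le> next_start i)"

lemma gap_index:
  "0 < q \<Longrightarrow> q < n \<Longrightarrow> Suc (gap_index q) < k \<and> start (gap_index q) < q \<and> q \<le> next_start (gap_index q)"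
  unfolding gap_index_def by (rule someI_ex) (rule gap_exists)

text \<open>Each of the \<open>k - 1\<close> gaps between consecutive start positions contains at most one center,
  and there are exactly \<open>k - 1\<close> centers, so every gap contains one.\<close>

lemma next_start_eq: assumes i: "Suc i < k" shows "next_start i = start (Suc i)"
proof -
  let ?C = "{c. center c}"
  have gap: "Suc (gap_index c) < k" "start (gap_index c) < c" "c \<le> next_start (gap_index c)"
    if "c \<in> ?C" for c
    using gap_index[of c] that unfolding center_def by auto
  have "inj_on gap_index ?C"
  proof (rule inj_onI)
    fix c1 c2 assume c1: "c1 \<in> ?C" and c2: "c2 \<in> ?C" and eq: "gap_index c1 = gap_index c2"
    let ?i = "gap_index c1"
    have symmetric: "next_start ?i = start (Suc ?i)"
      using next_start_eq_if_center[OF gap(1)[OF c1]] c1 gap[OF c1] by simp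
    have "c1 = (start ?i + 1 + next_start ?i) div 2"
      using center_eq_if_symmetric[OF gap(1)[OF c1] symmetric] c1 gap[OF c1] by simp
    moreover have "c2 = (start ?i + 1 + next_start ?i) div 2"
      using center_eq_if_symmetric[OF gap(1)[OF c1] symmetric] c2 gap[OF c2] eq by simp
    ultimately show "c1 = c2" by simp
  qed
  moreover have "finite ?C" by (rule finite_subset[of _ "{..<n}"]) (auto simp: center_def)
  ultimately have "card (gap_index ` ?C) = card {..<k-1}" using card_centers by (simp add: card_image)
  moreover have "gap_index ` ?C \<subseteq> {..<k-1}"
  proof
    fix x assume "x \<in> gap_index ` ?C"
    then obtain c where "c \<in> ?C" "x = gap_index c" by blast
    then show "x \<in> {..<k-1}" using gap[of c] by simp
  qed
  ultimately have "gap_index ` ?C = {..<k-1}" by (intro card_subset_eq) auto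
  then have "i \<in> gap_index ` ?C" using i by simp
  then obtain c where "c \<in> ?C" "i = gap_index c" by blast
  then show ?thesis using next_start_eq_if_center[OF gap(1) _ gap(2,3)] by simp
qed

lemma start_less_start_Suc: "Suc i < k \<Longrightarrow> start i < start (Suc i)"
  using next_start(1) next_start_eq by simp

lemma start_palindrome:
  assumes "Suc i < k" "0 < m" "m < start (Suc i) - start i"
  shows "w ! (start i + m) = w ! (start (Suc i) - m)"
  using complement_chain_letter[OF assms(1), of "m - 1"] next_start_eq[OF assms(1)] assms(2,3)
  by (simp add: Suc_diff_Suc)

definition canonical_factors :: "'a list list" where
  "canonical_factors = map (\<lambda>i. take (start (Suc i) - start i - 1) (drop (Suc (start i)) w)) [0..<k-1]"

lemma length_canonical_factors: "length canonical_factors = k - 1"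
  by (simp add: canonical_factors_def)

lemma canonical_factors_nth:
  assumes "Suc i < k"
  shows "canonical_factors ! i = take (start (Suc i) - start i - 1) (drop (Suc (start i)) w)"
proof -
  have "i < k - 1" using assms by simp
  then show ?thesis by (simp add: canonical_factors_def)
qed

lemma drop_start_eq:
  assumes "Suc i < k"
  shows "drop (start i) w = L!i # canonical_factors!i @ drop (start (Suc i)) w"
proof -
  let ?l = "start (Suc i) - start i - 1"
  have "drop (start i) w = w ! start i # drop (Suc (start i)) w"
    using start_lt assms by (simp add: Cons_nth_drop_Suc)
  also have "drop (Suc (start i)) w = take ?l (drop (Suc (start i)) w) @ drop ?l (drop (Suc (start i)) w)"
    by (rule append_take_drop_id[symmetric])
  also have "drop ?l (drop (Suc (start i)) w) = drop (start (Suc i)) w"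
    using start_less_start_Suc[OF assms] by simp
  finally show ?thesis using canonical_factors_nth[OF assms] letter_start assms by simp
qed

lemma sw_canonical_factors: "i < k \<Longrightarrow> sw (drop i L) (drop i canonical_factors) = drop (start i) w"
proof (induction "k - 1 - i" arbitrary: i)
  case 0
  then have "i = k - 1" by simp
  moreover have "drop (n - 1) w = [last w]"
    using length_pos by (cases w rule: rev_cases) auto
  ultimately show ?case
    using sw_drop_last[of L] k_pos start_last letter_start[of "k - 1"] length_pos
    by (simp add: last_conv_nth)
next
  case (Suc d)
  then have "Suc i < k" by simp
  then show ?case
    using sw_drop_Suc[of i L canonical_factors] length_canonical_factors drop_start_eq Suc.hyps by simp
qed

lemma canonical_factors_palindromes:
  assumes "Suc i < k"
  shows "rev (canonical_factors!i) = canonical_factors!i"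
proof (rule nth_equalityI)
  let ?l = "start (Suc i) - start i - 1"
  have start_less: "start i < start (Suc i)" "start (Suc i) < n"
    using start_less_start_Suc start_lt assms by auto
  then have len: "length (canonical_factors!i) = ?l" using canonical_factors_nth[OF assms] by simp
  have nth: "canonical_factors!i ! m = w ! (start i + Suc m)" if "m < ?l" for m
    using canonical_factors_nth[OF assms] start_less that by simp
  show "length (rev (canonical_factors!i)) = length (canonical_factors!i)" by simp
  fix m assume "m < length (rev (canonical_factors!i))"
  then have m: "m < ?l" using len by simp
  have "rev (canonical_factors!i) ! m = w ! (start i + (?l - m))"
    using len m nth[of "?l - Suc m"] by (simp add: rev_nth Suc_diff_Suc)
  also have "\<dots> = w ! (start (Suc i) - (?l - m))"
    using start_palindrome[OF assms, of "?l - m"] m by simp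
  also have "start (Suc i) - (?l - m) = start i + Suc m" using m start_less by simp
  finally show "rev (canonical_factors!i) ! m = canonical_factors!i ! m" using nth[OF m] by simp
qed

lemma psf_canonical_factors: "palindromic_special_factorization w canonical_factors"
proof -
  have "w = sw L canonical_factors" using sw_canonical_factors[of 0] k_pos start_0 by simp
  moreover have "\<forall>p\<in>set canonical_factors. rev p = p"
    using canonical_factors_palindromes length_canonical_factors by (auto simp: in_set_conv_nth)
  ultimately show ?thesis
    using length_canonical_factors k_pos
    by (simp add: palindromic_special_factorization_def special_factorization_def)
qed

lemma rot_cprev_mirror_nth:
  assumes "P < n" "m \<le> P"
  shows "rot (cprev (mirror P)) ! m = w ! (P - m)"
proof -
  have "(cprev (mirror P) + m) mod n = (max_pos + 2*n - 1 - P + m) mod n"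
    using assms(1) by (simp add: cprev_mirror mod_add_left_eq)
  also have "max_pos + 2*n - 1 - P + m = max_pos + 2*n - 1 - (P - m)" using assms by simp
  also have "(max_pos + 2*n - 1 - (P - m)) mod n = cprev (mirror (P - m))"
    using assms by (simp add: cprev_mirror)
  finally show ?thesis using assms rot_nth[of m] letter_cprev_mirror[of "P - m"] by simp
qed

lemma rank_cprev_mirror_start:
  assumes "j < k"
  shows "rank (cprev (mirror (start j))) + 1 = n_below (L!j) + n_occ (L!j)"
proof -
  let ?z = "cprev (mirror (start j))"
  have "w ! ?z = L!j" using letter_cprev_mirror start_lt letter_start assms by simp
  then have "rank (mirror (start j)) + n_below (L!j) = rank ?z + n_above (L!j)"
    using rank_cnext[OF cprev_lt, of "mirror (start j)"] cnext_cprev[OF mirror_lt] by simp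
  moreover have "rank (mirror (start j)) = n - 1 - n_below (L!j)"
    using rank_mirror start_lt rank_start assms by simp
  ultimately show ?thesis using n_below_occ_above[of "L!j"] n_below_L_lt[OF assms] by linarith
qed

text \<open>Reading \<open>w\<close> backwards from \<open>start j\<close> gives, by the symmetry \<open>letter_cprev_mirror\<close>,
  the greatest rotation starting with \<open>L!j\<close>.\<close>

lemma backward_reading_not_less:
  assumes j: "j < k" and s: "s < n" "w!s = L!j" and D: "D \<le> start j" "s + D < n"
    and agree: "\<forall>m<D. w!(s + m) = w!(start j - m)"
  shows "\<not> w!(start j - D) < w!(s + D)"
proof
  assume less: "w!(start j - D) < w!(s + D)"
  let ?z = "cprev (mirror (start j))"
  have "\<forall>m<D. rot ?z ! m = rot s ! m"
    using agree rot_cprev_mirror_nth start_lt[OF j] rot_nth[of _ s] D by simp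
  moreover have "rot ?z ! D < rot s ! D"
    using less rot_cprev_mirror_nth start_lt[OF j] rot_nth[of D s] D by simp
  moreover have "D < n" using D by simp
  ultimately have "rot ?z < rot s"
    using less_same_length_iff_nth[of "rot ?z" "rot s"] by auto
  then have "rank ?z < rank s" using rank_less_iff cprev_lt s by simp
  then show False
    using rank_cprev_mirror_start[OF j] rank_first_letter_block(2)[OF s(1)] s(2) by simp
qed

definition inner_palindrome :: "nat \<Rightarrow> nat \<Rightarrow> bool" where
  "inner_palindrome a b \<longleftrightarrow> (\<forall>m. 0 < m \<and> m < b - a \<longrightarrow> w!(a + m) = w!(b - m))"

text \<open>The mirror image of \<open>start j\<close> in the palindrome would read backwards from \<open>start j\<close>
  up to the larger letter \<open>w!b\<close>.\<close>

lemma no_start_inside_inner_palindrome: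
  assumes pal: "inner_palindrome a b" and ab: "w!a < w!b" "b < n"
    and j: "j < k" "a < start j" "start j < b"
  shows False
proof -
  let ?P = "start j"
  let ?s = "a + (b - ?P)"
  have pal': "w!(a + m) = w!(b - m)" if "0 < m" "m < b - a" for m
    using pal that by (simp add: inner_palindrome_def)
  have "w!?s = L!j" using pal'[of "b - ?P"] j letter_start by simp
  moreover have "\<forall>m < ?P - a. w!(?s + m) = w!(?P - m)"
    using pal'[of "b - ?P + _"] j by (simp add: add.assoc)
  moreover have "?P - (?P - a) = a" "?s + (?P - a) = b" "?s < n" using j ab by auto
  ultimately show False
    using backward_reading_not_less[OF j(1), of ?s "?P - a"] ab by simp
qed

lemma inner_palindrome_bounds_eq_start:
  assumes i: "Suc i < k" and bounds: "a \<le> start i" "start (Suc i) \<le> b" "b < n"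
    and letters: "w!a = L!i" "w!b = L!Suc i" and pal: "inner_palindrome a b"
  shows "a = start i \<and> b = start (Suc i)"
proof -
  have "w!a < w!b" using letters L_less_iff i by simp
  moreover have "start i < start (Suc i)" using start_less_start_Suc[OF i] .
  ultimately show ?thesis
    using no_start_inside_inner_palindrome[OF pal _ bounds(3)] bounds i
    by (metis Suc_lessD le_neq_implies_less order.strict_trans1 order.strict_trans2)
qed

context
  fixes ps assumes psf: "palindromic_special_factorization w ps"
begin

lemma psf_length: "length ps = k - 1"
  using psf unfolding palindromic_special_factorization_def special_factorization_def by linarith

lemma psf_drop_sw_pos: "i < k \<Longrightarrow> drop (sw_pos ps i) w = sw (drop i L) (drop i ps)"
  using psf drop_sw_pos[of ps L i]
  by (simp add: palindromic_special_factorization_def special_factorization_def)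

lemma psf_sw_pos_letter: assumes "i < k" shows "sw_pos ps i < n" "w ! sw_pos ps i = L!i"
proof -
  obtain r where r: "drop (sw_pos ps i) w = L!i # r"
    using psf_drop_sw_pos[OF assms] sw_Cons_exists assms by (metis Cons_nth_drop_Suc)
  then show "sw_pos ps i < n" by (metis drop_all list.distinct(1) not_less)
  then show "w ! sw_pos ps i = L!i" using r by (metis hd_drop_conv_nth list.sel(1))
qed

lemma psf_sw_pos_last: "sw_pos ps (k - 1) = n - 1"
proof -
  have "drop (sw_pos ps (k - 1)) w = [last L]"
    using psf_drop_sw_pos[of "k - 1"] sw_drop_last[of L] k_pos by simp
  then have "n - sw_pos ps (k - 1) = 1" by (metis length_drop length_Cons list.size(3) One_nat_def)
  then show ?thesis by simp
qed

lemma psf_drop_sw_pos_Suc: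
  assumes "Suc i < k"
  shows "drop (sw_pos ps i) w = L!i # ps!i @ drop (sw_pos ps (Suc i)) w"
  using psf_drop_sw_pos[of i] psf_drop_sw_pos[OF assms] sw_drop_Suc[of i L ps] psf_length assms
  by simp

lemma psf_sw_pos_Suc: "Suc i < k \<Longrightarrow> sw_pos ps (Suc i) = sw_pos ps i + 1 + length (ps!i)"
  using sw_pos_Suc[of i ps] psf_length by simp

lemma psf_inner_palindrome:
  assumes i: "Suc i < k"
  shows "inner_palindrome (sw_pos ps i) (sw_pos ps (Suc i))"
  unfolding inner_palindrome_def
proof (intro allI impI)
  fix m assume m: "0 < m \<and> m < sw_pos ps (Suc i) - sw_pos ps i"
  let ?p = "ps!i" and ?t = "sw_pos ps i"
  have "rev ?p = ?p" using psf i psf_length by (simp add: palindromic_special_factorization_def)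
  have nth: "w ! (Suc ?t + j) = ?p ! j" if "j < length ?p" for j
  proof -
    have "?t < n" using psf_sw_pos_letter(1)[of i] i by simp
    then have "w ! (Suc ?t + j) = drop ?t w ! Suc j" by simp
    also have "\<dots> = ?p ! j" using psf_drop_sw_pos_Suc[OF i] that by (simp add: nth_append)
    finally show ?thesis .
  qed
  have len: "m - 1 < length ?p" "length ?p - m < length ?p" using m psf_sw_pos_Suc[OF i] by auto
  have "w ! (?t + m) = ?p ! (m - 1)" using nth[OF len(1)] m by simp
  also have "\<dots> = rev ?p ! (m - 1)" using \<open>rev ?p = ?p\<close> by simp
  also have "\<dots> = ?p ! (length ?p - m)" using len by (simp add: rev_nth)
  also have "\<dots> = w ! (Suc ?t + (length ?p - m))" using nth[OF len(2)] by simp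
  also have "Suc ?t + (length ?p - m) = sw_pos ps (Suc i) - m"
    using m psf_sw_pos_Suc[OF i] by linarith
  finally show "w ! (?t + m) = w ! (sw_pos ps (Suc i) - m)" .
qed

lemma psf_sw_pos_eq_start: "i < k \<Longrightarrow> sw_pos ps i = start i"
proof -
  have bounds_eq: "sw_pos ps i = start i \<and> sw_pos ps (Suc i) = start (Suc i)"
    if "Suc i < k" "sw_pos ps i \<le> start i" "start (Suc i) \<le> sw_pos ps (Suc i)" for i
    using inner_palindrome_bounds_eq_start[OF that(1-3)] psf_sw_pos_letter that(1)
      psf_inner_palindrome[OF that(1)] by simp
  have ge: "start i \<le> sw_pos ps i" if "i < k" for i
  proof -
    have "i \<le> k - 1" using that by simp
    then show ?thesis
    proof (induction rule: inc_induct)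
      case base
      then show ?case using psf_sw_pos_last start_last by simp
    next
      case (step i)
      then show ?case using bounds_eq[of i] by fastforce
    qed
  qed
  show "i < k \<Longrightarrow> sw_pos ps i = start i"
  proof (induction i)
    case 0
    then show ?case using start_0 by (simp add: sw_pos_def)
  next
    case (Suc i)
    then show ?case using bounds_eq[of i] ge[of "Suc i"] by simp
  qed
qed

lemma psf_eq_canonical_factors: "ps = canonical_factors"
proof (rule nth_equalityI)
  show "length ps = length canonical_factors" using psf_length length_canonical_factors by simp
  fix i assume "i < length ps"
  then have i: "Suc i < k" using psf_length by simp
  then have "L!i # ps!i @ drop (start (Suc i)) w = L!i # canonical_factors!i @ drop (start (Suc i)) w"
    using psf_drop_sw_pos_Suc drop_start_eq psf_sw_pos_eq_start by (metis Suc_lessD)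
  then show "ps!i = canonical_factors!i" by simp
qed

end

lemma rot_start_le: "i < k \<Longrightarrow> q < n \<Longrightarrow> w!q = L!i \<Longrightarrow> rot (start i) \<le> rot q"
  using rank_first_letter_block(1) rank_le_iff start_lt rank_start by metis

lemma drop_start_le_suffix:
  assumes i: "i < k" and t: "w = y @ t" "t \<noteq> []" "hd t = L!i"
  shows "drop (start i) w \<le> t"
proof -
  let ?q = "length y"
  have t_eq: "t = drop ?q w" using t(1) by simp
  then have q: "?q < n" using t(2) by (metis drop_all not_less)
  then have "w ! ?q = L!i" using t(3) t_eq by (simp add: hd_drop_conv_nth)
  then have le: "rot (start i) \<le> rot ?q" using rot_start_le i q by simp
  show ?thesis
  proof (cases "start i = ?q")
    case False
    then have "rotate (start i) w < rotate ?q w"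
      using le rot_inj[OF start_lt[OF i] q] by (auto simp: rot_def order.order_iff_strict)
    then show ?thesis using lyndon_drop_le_drop[OF lyndon_w start_lt[OF i] q] t_eq by simp
  qed (use t_eq in simp)
qed

lemma rot_start_le_conjugate:
  assumes i: "i < k" and c: "c \<in> conjugates w" "c \<noteq> []" "hd c = L!i"
  shows "rot (start i) \<le> c"
proof -
  obtain q where q: "q < n" "c = rot q" using c(1) conjugates_eq_rot by auto
  then have "w!q = L!i" using c(2,3) rot_nth_0 by (simp add: hd_conv_nth)
  then show ?thesis using rot_start_le i q by simp
qed

lemma start_minimal:
  assumes i: "i < k"
  shows "\<exists>x. w = x @ drop (start i) w \<and>
      drop (start i) w \<in> {t. \<exists>y. w = y @ t \<and> t \<noteq> [] \<and> hd t = L!i} \<and>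
      (\<forall>t \<in> {t. \<exists>y. w = y @ t \<and> t \<noteq> [] \<and> hd t = L!i}. drop (start i) w \<le> t) \<and>
      drop (start i) w @ x \<in> {c \<in> conjugates w. c \<noteq> [] \<and> hd c = L!i} \<and>
      (\<forall>c \<in> {c \<in> conjugates w. c \<noteq> [] \<and> hd c = L!i}. drop (start i) w @ x \<le> c)"
proof (intro exI conjI)
  have start: "start i < n" "w ! start i = L!i" using start_lt letter_start i by auto
  have rot_start: "drop (start i) w @ take (start i) w = rot (start i)"
    using rot_drop_take start by simp
  show "w = take (start i) w @ drop (start i) w" by simp
  show "drop (start i) w \<in> {t. \<exists>y. w = y @ t \<and> t \<noteq> [] \<and> hd t = L!i}"
    using start by (auto simp: hd_drop_conv_nth intro: exI[of _ "take (start i) w"])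
  show "\<forall>t \<in> {t. \<exists>y. w = y @ t \<and> t \<noteq> [] \<and> hd t = L!i}. drop (start i) w \<le> t"
    using drop_start_le_suffix[OF i] by blast
  show "drop (start i) w @ take (start i) w \<in> {c \<in> conjugates w. c \<noteq> [] \<and> hd c = L!i}"
    unfolding rot_start using start rot_in_conjugates rot_nth_0 length_pos
    by (auto simp: hd_conv_nth simp flip: length_greater_0_conv)
  show "\<forall>c \<in> {c \<in> conjugates w. c \<noteq> [] \<and> hd c = L!i}. drop (start i) w @ take (start i) w \<le> c"
    unfolding rot_start using rot_start_le_conjugate[OF i] by blast
qed

end

theorem corollary6p1:
  fixes w :: "'a::linorder list"
  assumes "lyndon w" and "perfectly_clustering w"
  shows "(\<exists>!ps. palindromic_special_factorization w ps) \<and>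
         (\<forall>ps. palindromic_special_factorization w ps \<longrightarrow>
            (\<forall>i < length (letters w).
               let a = letters w ! i;
                   s = sw (drop i (letters w)) (drop i ps)
               in \<exists>x. w = x @ s \<and>
                  s \<in> {t. \<exists>y. w = y @ t \<and> t \<noteq> [] \<and> hd t = a} \<and>
                  (\<forall>t \<in> {t. \<exists>y. w = y @ t \<and> t \<noteq> [] \<and> hd t = a}. s \<le> t) \<and>
                  s @ x \<in> {c \<in> conjugates w. c \<noteq> [] \<and> hd c = a} \<and>
                  (\<forall>c \<in> {c \<in> conjugates w. c \<noteq> [] \<and> hd c = a}. s @ x \<le> c)))"
proof -
  interpret perfectly_clustering_lyndon w
    using assms by unfold_locales (simp_all add: lyndon_def)
  show ?thesis
  proof (intro conjI allI impI)
    show "\<exists>!ps. palindromic_special_factorization w ps"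
      using psf_canonical_factors psf_eq_canonical_factors by blast
  next
    fix ps i
    assume ps: "palindromic_special_factorization w ps" and i: "i < length (letters w)"
    have "sw (drop i (letters w)) (drop i ps) = drop (start i) w"
      using sw_canonical_factors[OF i] psf_eq_canonical_factors[OF ps] by simp
    then show "let a = letters w ! i; s = sw (drop i (letters w)) (drop i ps)
      in \<exists>x. w = x @ s \<and>
        s \<in> {t. \<exists>y. w = y @ t \<and> t \<noteq> [] \<and> hd t = a} \<and>
        (\<forall>t \<in> {t. \<exists>y. w = y @ t \<and> t \<noteq> [] \<and> hd t = a}. s \<le> t) \<and>
        s @ x \<in> {c \<in> conjugates w. c \<noteq> [] \<and> hd c = a} \<and>
        (\<forall>c \<in> {c \<in> conjugates w. c \<noteq> [] \<and> hd c = a}. s @ x \<le> c)"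
      using start_minimal[OF i] by (simp add: Let_def)
  qed
qed

end
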